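(* Let $A_1,\dots,A_m\in\mathbb{S}^n$, $b\in\mathbb{R}^m$, $C\in\mathbb{S}^n$, and let Assumption 1 hold for some $p\ge n$. Then every second-order critical point $Y\in\mathcal{M}_p$ of (P) is globally optimal for (P), and $X=YY^\top$ is globally optimal for (SDP).
   Context: $\mathbb{S}^n$: real symmetric $n\times n$ matrices; $\langle U,V\rangle=\operatorname{tr}(U^\top V)$. $\mathcal{A}(X)_i=\langle A_i,X\rangle$, $\mathcal{A}^*(\nu)=\sum_i\nu_iA_i$. (SDP): minimize $\langle C,X\rangle$ over $\{X\in\mathbb{S}^n:\mathcal{A}(X)=b,\ X\succeq0\}$. $\mathcal{M}_p=\{Y\in\mathbb{R}^{n\times p}:\mathcal{A}(YY^\top)=b\}$; (P): minimize $\langle CY,Y\rangle$ over $\mathcal{M}_p$. Assumption 1 (for $p$ with $\mathcal{M}_p\ne\emptyset$): either (a) $A_1Y,\dots,A_mY$ are linearly independent for all $Y\in\mathcal{M}_p$, or (b) $\operatorname{span}\{A_1Y,\dots,A_mY\}$ has constant dimension on an open neighborhood of $\mathcal{M}_p$. For $Y\in\mathcal{M}_p$: $T_Y=\{\dot Y:\langle A_iY,\dot Y\rangle=0\ \forall i\}$; $G_{ij}=\langle A_iY,A_jY\rangle$, $\mu=G^\dagger\mathcal{A}(CYY^\top)$, $S(Y)=C-\mathcal{A}^*(\mu)$. $Y$ is second-order critical if $S(Y)Y=0$ and $\langle\dot Y,S(Y)\dot Y\rangle\ge0$ for all $\dot Y\in T_Y$. *)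

theory Defs
  imports "HOL-Analysis.Analysis"
begin

definition frob :: "real^'p^'n \<Rightarrow> real^'p^'n \<Rightarrow> real" where
  "frob U V = trace (transpose U ** V)"

definition sym_mat :: "real^'n^'n \<Rightarrow> bool" where
  "sym_mat X \<longleftrightarrow> transpose X = X"

definition psd :: "real^'n^'n \<Rightarrow> bool" where
  "psd X \<longleftrightarrow> (\<forall>x. 0 \<le> x \<bullet> (X *v x))"

definition pinv :: "real^'m^'m \<Rightarrow> real^'m^'m" where
  "pinv G = (THE H. G ** H ** G = G \<and> H ** G ** H = H \<and>
                    transpose (G ** H) = G ** H \<and> transpose (H ** G) = H ** G)"

definition Amap :: "('m::finite \<Rightarrow> real^'n^'n) \<Rightarrow> real^'n^'n \<Rightarrow> real^'m" where
  "Amap A X = (\<chi> i. frob (A i) X)"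

definition Aadj :: "('m::finite \<Rightarrow> real^'n^'n) \<Rightarrow> real^'m \<Rightarrow> real^'n^'n" where
  "Aadj A \<nu> = (\<Sum>i\<in>UNIV. (\<nu> $ i) *\<^sub>R A i)"

definition sdp_feasible :: "('m::finite \<Rightarrow> real^'n^'n) \<Rightarrow> real^'m \<Rightarrow> real^'n^'n \<Rightarrow> bool" where
  "sdp_feasible A b X \<longleftrightarrow> sym_mat X \<and> Amap A X = b \<and> psd X"

definition sdp_optimal ::
  "('m::finite \<Rightarrow> real^'n^'n) \<Rightarrow> real^'m \<Rightarrow> real^'n^'n \<Rightarrow> real^'n^'n \<Rightarrow> bool" where
  "sdp_optimal A b C X \<longleftrightarrow> sdp_feasible A b X \<and>
     (\<forall>X'. sdp_feasible A b X' \<longrightarrow> frob C X \<le> frob C X')"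

definition Mp :: "('m::finite \<Rightarrow> real^'n^'n) \<Rightarrow> real^'m \<Rightarrow> (real^'p^'n) set" where
  "Mp A b = {Y. Amap A (Y ** transpose Y) = b}"

definition P_obj :: "real^'n^'n \<Rightarrow> real^'p^'n \<Rightarrow> real" where
  "P_obj C Y = frob (C ** Y) Y"

definition P_optimal ::
  "('m::finite \<Rightarrow> real^'n^'n) \<Rightarrow> real^'m \<Rightarrow> real^'n^'n \<Rightarrow> real^'p^'n \<Rightarrow> bool" where
  "P_optimal A b C Y \<longleftrightarrow> Y \<in> Mp A b \<and> (\<forall>Y'::real^'p^'n. Y' \<in> Mp A b \<longrightarrow> P_obj C Y \<le> P_obj C Y')"

text \<open>Assumption 1 (for the given p, encoded by the column type 'p).\<close>
definition assumption1 :: "('m::finite \<Rightarrow> real^'n^'n) \<Rightarrow> real^'m \<Rightarrow> 'p::finite itself \<Rightarrow> bool" where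
  "assumption1 A b (_::'p itself) \<longleftrightarrow>
     (\<forall>Y::real^'p^'n. Y \<in> Mp A b \<longrightarrow>
        (\<forall>c::'m \<Rightarrow> real. (\<Sum>i\<in>UNIV. c i *\<^sub>R (A i ** Y)) = 0 \<longrightarrow> (\<forall>i. c i = 0)))
   \<or> (\<exists>U::(real^'p^'n) set. open U \<and> Mp A b \<subseteq> U \<and>
        (\<exists>d. \<forall>Y\<in>U. dim (span (range (\<lambda>i. A i ** Y))) = d))"

definition tangent :: "('m::finite \<Rightarrow> real^'n^'n) \<Rightarrow> real^'p^'n \<Rightarrow> (real^'p^'n) set" where
  "tangent A Y = {Yd. \<forall>i. frob (A i ** Y) Yd = 0}"

definition gram :: "('m::finite \<Rightarrow> real^'n^'n) \<Rightarrow> real^'p^'n \<Rightarrow> real^'m^'m" where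
  "gram A Y = (\<chi> i j. frob (A i ** Y) (A j ** Y))"

definition mult :: "('m::finite \<Rightarrow> real^'n^'n) \<Rightarrow> real^'n^'n \<Rightarrow> real^'p^'n \<Rightarrow> real^'m" where
  "mult A C Y = pinv (gram A Y) *v Amap A (C ** Y ** transpose Y)"

definition Smat :: "('m::finite \<Rightarrow> real^'n^'n) \<Rightarrow> real^'n^'n \<Rightarrow> real^'p^'n \<Rightarrow> real^'n^'n" where
  "Smat A C Y = C - Aadj A (mult A C Y)"

definition second_order_critical ::
  "('m::finite \<Rightarrow> real^'n^'n) \<Rightarrow> real^'m \<Rightarrow> real^'n^'n \<Rightarrow> real^'p^'n \<Rightarrow> bool" where
  "second_order_critical A b C Y \<longleftrightarrow> Y \<in> Mp A b \<and> Smat A C Y ** Y = 0 \<and>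
     (\<forall>Yd\<in>tangent A Y. 0 \<le> frob Yd (Smat A C Y ** Yd))"

end

theory Submission
  imports Defs
begin

text \<open>
  The matrix \<open>S = S(Y) = C - \<A>\<^sup>*(\<mu>)\<close> is a dual certificate for the SDP. It is
  positive semidefinite: if \<open>Y z = 0\<close> for some \<open>z \<noteq> 0\<close>, then every \<open>x z\<^sup>T\<close> is a tangent
  vector and the second-order condition gives \<open>|z|\<^sup>2 x\<^sup>T S x \<ge> 0\<close>; otherwise \<open>p \<ge> n\<close> makes
  \<open>Y\<close> onto, and \<open>S Y = 0\<close> forces \<open>S = 0\<close>. Weak duality then gives, for every feasible \<open>X\<close>,
  \<open>\<langle>C, X\<rangle> = \<langle>S, X\<rangle> + \<mu>\<^sup>T b \<ge> \<mu>\<^sup>T b = \<langle>C, Y Y\<^sup>T\<rangle>\<close>, since the trace of a product of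
  positive semidefinite matrices is nonnegative. Optimality for (P) follows because
  \<open>\<langle>C Y', Y'\<rangle> = \<langle>C, Y' Y'\<^sup>T\<rangle>\<close> and \<open>Y' Y'\<^sup>T\<close> is feasible for every \<open>Y' \<in> \<M>\<^sub>p\<close>.
\<close>

lemma frob_eq_sum: "frob U V = (\<Sum>i\<in>UNIV. \<Sum>j\<in>UNIV. U$i$j * V$i$j)"
  unfolding frob_def trace_def matrix_matrix_mult_def transpose_def
  by (simp add: sum.swap[of _ "UNIV::'b set"])

lemma inner_matrix_vector_eq_sum:
  "(y::real^'n) \<bullet> (M *v z) = (\<Sum>i\<in>UNIV. \<Sum>j\<in>UNIV. y$i * M$i$j * z$j)"
  unfolding inner_vec_def matrix_vector_mult_def
  by (simp add: sum_distrib_left mult.assoc)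

lemma sym_mat_iff: "sym_mat X \<longleftrightarrow> (\<forall>i j. X$i$j = X$j$i)"
  unfolding sym_mat_def by (auto simp: vec_eq_iff transpose_def)

lemma sym_mat_inner_commute:
  assumes "sym_mat X" shows "(y::real^'n) \<bullet> (X *v z) = z \<bullet> (X *v y)"
  using assms unfolding sym_mat_def
  by (metis dot_lmul_matrix inner_commute vector_transpose_matrix)

lemma frob_add_left: "frob (M + N) X = frob M X + frob N X"
  unfolding frob_eq_sum by (simp add: sum.distrib distrib_right)

lemma frob_diff_right: "frob M (X - Z) = frob M X - frob M Z"
  unfolding frob_eq_sum by (simp add: sum_subtractf right_diff_distrib)

lemma frob_scaleR_right: "frob M (r *\<^sub>R X) = r * frob M X"
  unfolding frob_eq_sum by (simp add: sum_distrib_left mult_ac)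

lemma frob_Aadj: "frob (Aadj A \<nu>) X = \<nu> \<bullet> Amap A X"
proof -
  have "frob (Aadj A \<nu>) X = (\<Sum>a\<in>UNIV. \<Sum>b\<in>UNIV. \<Sum>i\<in>UNIV. \<nu>$i * (A i$a$b * X$a$b))"
    unfolding Aadj_def frob_eq_sum
    by (simp add: sum_component sum_distrib_left sum_distrib_right mult_ac)
  also have "\<dots> = (\<Sum>i\<in>UNIV. \<Sum>a\<in>UNIV. \<Sum>b\<in>UNIV. \<nu>$i * (A i$a$b * X$a$b))"
    by (subst sum.swap) (rule sum.swap)
  also have "\<dots> = \<nu> \<bullet> Amap A X"
    unfolding Amap_def frob_eq_sum inner_vec_def by (simp add: sum_distrib_left)
  finally show ?thesis .
qed

lemma frob_mult_transpose:
  fixes Y :: "real^'p^'n"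
  shows "frob M (Y ** transpose Y) = frob (M ** Y) Y"
proof -
  have "trace (transpose M ** (Y ** transpose Y)) = trace ((transpose M ** Y) ** transpose Y)"
    by (simp only: matrix_mul_assoc)
  also have "\<dots> = trace (transpose Y ** (transpose M ** Y))"
    by (rule trace_mul_sym)
  finally show ?thesis
    unfolding frob_def matrix_transpose_mul by (simp only: matrix_mul_assoc)
qed

definition outer :: "real^'n \<Rightarrow> real^'p \<Rightarrow> real^'p^'n" where
  "outer x z = (\<chi> i j. x$i * z$j)"

lemma outer_mult_vector: "outer x z *v y = (z \<bullet> y) *\<^sub>R x"
  unfolding outer_def
  by (simp add: vec_eq_iff matrix_vector_mult_def inner_vec_def sum_distrib_left mult_ac)

lemma matrix_mult_outer: "M ** outer x z = outer (M *v x) z"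
  unfolding outer_def
  by (simp add: vec_eq_iff matrix_matrix_mult_def matrix_vector_mult_def sum_distrib_left mult_ac)

lemma frob_outer_right: "frob M (outer x z) = x \<bullet> (M *v z)"
  unfolding frob_eq_sum inner_matrix_vector_eq_sum outer_def by (simp add: mult_ac)

lemma frob_outer_outer: "frob (outer x z) (outer u v) = (x \<bullet> u) * (z \<bullet> v)"
  by (simp add: frob_outer_right outer_mult_vector inner_commute)

lemma nonneg_quadratic_imp_discrim_nonpos:
  fixes a b c :: real
  assumes "0 \<le> a" and nonneg: "\<And>t. 0 \<le> a * t\<^sup>2 + b * t + c"
  shows "b\<^sup>2 \<le> 4 * a * c"
proof (cases "a = 0")
  case True
  have "b = 0"
  proof (rule ccontr)
    assume "b \<noteq> 0"
    then show False using nonneg[of "- (c + 1) / b"] True by simp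
  qed
  then show ?thesis using True by simp
next
  case False
  then have "0 < a" using \<open>0 \<le> a\<close> by simp
  have "0 \<le> a * (- b / (2 * a))\<^sup>2 + b * (- b / (2 * a)) + c" by (rule nonneg)
  also have "\<dots> = (4 * a * c - b\<^sup>2) / (4 * a)"
    using \<open>0 < a\<close> by (simp add: field_simps power2_eq_square)
  finally show ?thesis using \<open>0 < a\<close> by (simp add: zero_le_divide_iff)
qed

lemma quadratic_form_add_scaleR:
  fixes X :: "real^'n^'n"
  assumes "sym_mat X"
  shows "(x + t *\<^sub>R y) \<bullet> (X *v (x + t *\<^sub>R y)) =
    (y \<bullet> (X *v y)) * t\<^sup>2 + 2 * (y \<bullet> (X *v x)) * t + x \<bullet> (X *v x)"
  using sym_mat_inner_commute[OF assms, of x y]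
  by (simp add: matrix_vector_right_distrib matrix_vector_mult_scaleR inner_add_left
      inner_add_right algebra_simps power2_eq_square)

lemma psd_cauchy_schwarz:
  fixes X :: "real^'n^'n"
  assumes "sym_mat X" "psd X"
  shows "(y \<bullet> (X *v x))\<^sup>2 \<le> (x \<bullet> (X *v x)) * (y \<bullet> (X *v y))"
proof -
  have "(2 * (y \<bullet> (X *v x)))\<^sup>2 \<le> 4 * (y \<bullet> (X *v y)) * (x \<bullet> (X *v x))"
  proof (rule nonneg_quadratic_imp_discrim_nonpos)
    show "0 \<le> y \<bullet> (X *v y)" using \<open>psd X\<close> unfolding psd_def by simp
    show "0 \<le> (y \<bullet> (X *v y)) * t\<^sup>2 + 2 * (y \<bullet> (X *v x)) * t + x \<bullet> (X *v x)" for t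
      using \<open>psd X\<close> unfolding psd_def quadratic_form_add_scaleR[OF \<open>sym_mat X\<close>, symmetric]
      by simp
  qed
  then show ?thesis by (simp add: power2_eq_square mult_ac)
qed

lemma psd_quadratic_form_eq_0_imp_kernel:
  fixes X :: "real^'n^'n"
  assumes "sym_mat X" "psd X" "x \<bullet> (X *v x) = 0"
  shows "X *v x = 0"
proof -
  have "((X *v x) \<bullet> (X *v x))\<^sup>2 \<le> 0"
    using psd_cauchy_schwarz[OF assms(1,2), of "X *v x" x] unfolding assms(3)
    by (simp only: mult_zero_left)
  then show ?thesis by (simp only: power2_less_eq_zero_iff inner_eq_zero_iff)
qed

lemma psd_rank_one_deflation:
  fixes X :: "real^'n^'n"
  assumes sym: "sym_mat X" and psd: "psd X" and "X *v x \<noteq> 0"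
    and c_def: "c = x \<bullet> (X *v x)" and X'_def: "X' = X - (1 / c) *\<^sub>R outer (X *v x) (X *v x)"
  shows "0 < c" "sym_mat X'" "psd X'" "dim {y. X *v y = 0} < dim {y. X' *v y = 0}"
proof -
  have "0 \<le> c" using psd unfolding psd_def c_def by simp
  moreover have "c \<noteq> 0"
    using psd_quadratic_form_eq_0_imp_kernel[OF sym psd] \<open>X *v x \<noteq> 0\<close> c_def by auto
  ultimately show "0 < c" by simp
  have X'_apply: "X' *v y = X *v y - ((y \<bullet> (X *v x)) / c) *\<^sub>R (X *v x)" for y
    unfolding X'_def
    by (simp add: matrix_vector_mult_diff_rdistrib scaleR_matrix_vector_assoc[symmetric]
        outer_mult_vector inner_commute)
  show "sym_mat X'"
    using sym unfolding X'_def sym_mat_iff outer_def by (simp add: mult_ac)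
  show "psd X'"
    unfolding psd_def
  proof
    fix y
    have "(y \<bullet> (X *v x))\<^sup>2 \<le> c * (y \<bullet> (X *v y))"
      unfolding c_def by (rule psd_cauchy_schwarz[OF sym psd])
    then have "(y \<bullet> (X *v x))\<^sup>2 / c \<le> y \<bullet> (X *v y)"
      using \<open>0 < c\<close> by (simp add: divide_le_eq mult.commute)
    then show "0 \<le> y \<bullet> (X' *v y)"
      unfolding X'_apply by (simp add: inner_diff_right power2_eq_square)
  qed
  have kernel_subset: "{y. X *v y = 0} \<subseteq> {y. X' *v y = 0}"
  proof
    fix y assume "y \<in> {y. X *v y = 0}"
    then have "X *v y = 0" by simp
    moreover have "y \<bullet> (X *v x) = 0"
      using \<open>X *v y = 0\<close> sym_mat_inner_commute[OF sym, of y x] by simp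
    ultimately show "y \<in> {y. X' *v y = 0}" using X'_apply by simp
  qed
  have "X' *v x = 0"
    using X'_apply[of x] \<open>0 < c\<close> unfolding c_def by (simp add: inner_commute)
  then have "{y. X *v y = 0} \<subset> {y. X' *v y = 0}"
    using kernel_subset \<open>X *v x \<noteq> 0\<close> by auto
  moreover have "subspace {y. M *v y = 0}" for M :: "real^'n^'n"
    by (rule real_vector.linear_subspace_kernel[OF matrix_vector_mul_linear])
  ultimately show "dim {y. X *v y = 0} < dim {y. X' *v y = 0}"
    by (metis dim_psubset real_vector.span_eq_iff)
qed

text \<open>
  Induction on the rank of \<open>X\<close>: every rank-one piece \<open>w w\<^sup>T / c\<close> peeled off by
  \<open>psd_rank_one_deflation\<close> contributes \<open>w\<^sup>T S w / c \<ge> 0\<close>.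
\<close>
lemma frob_psd_nonneg:
  fixes S X :: "real^'n^'n"
  assumes "psd S" "sym_mat X" "psd X"
  shows "0 \<le> frob S X"
  using assms(2,3)
proof (induction X rule: measure_induct_rule[where f = "\<lambda>X. CARD('n) - dim {y. X *v y = 0}"])
  case (less X)
  show ?case
  proof (cases "\<exists>x. X *v x \<noteq> 0")
    case False
    then have "X = 0" by (simp add: matrix_eq)
    then show ?thesis by (simp add: frob_eq_sum)
  next
    case True
    then obtain x where x: "X *v x \<noteq> 0" by blast
    define c where "c = x \<bullet> (X *v x)"
    define w where "w = X *v x"
    define X' where "X' = X - (1 / c) *\<^sub>R outer w w"
    note deflation = psd_rank_one_deflation[OF less.prems x c_def X'_def[unfolded w_def]]
    have "dim {y. X' *v y = 0} \<le> CARD('n)" by (rule dim_subset_UNIV_cart)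
    then have "0 \<le> frob S X'"
      using less.IH deflation(2-4) by simp
    moreover have "0 \<le> (1 / c) * frob S (outer w w)"
      using \<open>psd S\<close> deflation(1) unfolding frob_outer_right psd_def by simp
    moreover have "frob S X = frob S X' + (1 / c) * frob S (outer w w)"
      unfolding X'_def frob_diff_right frob_scaleR_right by simp
    ultimately show ?thesis by linarith
  qed
qed

lemma sdp_feasible_mult_transpose:
  fixes Y :: "real^'p^'n"
  assumes "Y \<in> Mp A b"
  shows "sdp_feasible A b (Y ** transpose Y)"
  unfolding sdp_feasible_def
proof (intro conjI)
  show "sym_mat (Y ** transpose Y)" unfolding sym_mat_def by (simp add: matrix_transpose_mul)
  show "Amap A (Y ** transpose Y) = b" using assms unfolding Mp_def by simp
  show "psd (Y ** transpose Y)" unfolding psd_def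
  proof
    fix x :: "real^'n"
    have "x \<bullet> ((Y ** transpose Y) *v x) = (x v* Y) \<bullet> (transpose Y *v x)"
      by (metis dot_lmul_matrix matrix_vector_mul_assoc)
    also have "x v* Y = transpose Y *v x"
      by (metis transpose_transpose vector_transpose_matrix)
    finally show "0 \<le> x \<bullet> ((Y ** transpose Y) *v x)" by simp
  qed
qed

lemma P_obj_eq_frob: "P_obj C Y = frob C (Y ** transpose Y)"
  unfolding P_obj_def frob_mult_transpose ..

lemma inj_matrix_vector_mult_imp_surj:
  fixes Y :: "real^'p^'n"
  assumes "inj ((*v) Y)" and "CARD('n) \<le> CARD('p)"
  shows "surj ((*v) Y)"
proof -
  have "dim (range ((*v) Y)) = dim (UNIV :: (real^'p) set)"
    using assms(1) by (intro dim_image_eq) (auto simp: inj_on_def inj_def)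
  then have "dim (range ((*v) Y)) = DIM(real^'n)"
    using assms(2) dim_subset_UNIV_cart[of "range ((*v) Y)"] by simp
  moreover have "subspace (range ((*v) Y))"
    by (rule real_vector.linear_subspace_image[OF matrix_vector_mul_linear]) simp
  ultimately show ?thesis
    by (metis dim_eq_full real_vector.span_eq_iff)
qed

lemma second_order_condition_imp_psd:
  fixes S :: "real^'n^'n" and Y :: "real^'p^'n"
  assumes "CARD('n) \<le> CARD('p)" and "S ** Y = 0"
    and second_order: "\<forall>Yd\<in>tangent A Y. 0 \<le> frob Yd (S ** Yd)"
  shows "psd S"
  unfolding psd_def
proof
  fix x :: "real^'n"
  show "0 \<le> x \<bullet> (S *v x)"
  proof (cases "inj ((*v) Y)")
    case True
    then obtain z where "x = Y *v z"
      using inj_matrix_vector_mult_imp_surj[OF _ assms(1)] by (metis surjD)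
    then have "S *v x = 0" using \<open>S ** Y = 0\<close> by (simp add: matrix_vector_mul_assoc)
    then show ?thesis by simp
  next
    case False
    then obtain u v where "Y *v u = Y *v v" "u \<noteq> v" unfolding inj_def by blast
    define z where "z = u - v"
    have "z \<noteq> 0" "Y *v z = 0"
      using \<open>Y *v u = Y *v v\<close> \<open>u \<noteq> v\<close>
      by (simp_all add: z_def matrix_vector_mult_diff_distrib)
    then have "outer x z \<in> tangent A Y"
      unfolding tangent_def by (simp add: frob_outer_right matrix_vector_mul_assoc[symmetric])
    then have "0 \<le> frob (outer x z) (S ** outer x z)" using second_order by blast
    then have "0 \<le> (x \<bullet> (S *v x)) * (z \<bullet> z)"
      by (simp add: matrix_mult_outer frob_outer_outer)
    moreover have "0 < z \<bullet> z" using \<open>z \<noteq> 0\<close> by simp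
    ultimately show ?thesis by (simp add: zero_le_mult_iff)
  qed
qed

lemma dual_certificate_imp_sdp_optimal:
  fixes Y :: "real^'p^'n"
  assumes "Y \<in> Mp A b" and "psd S" and "S ** Y = 0" and "C = S + Aadj A \<nu>"
  shows "sdp_optimal A b C (Y ** transpose Y)"
  unfolding sdp_optimal_def
proof (intro conjI allI impI)
  have frob_C: "frob C X = frob S X + \<nu> \<bullet> Amap A X" for X
    unfolding \<open>C = S + Aadj A \<nu>\<close> frob_add_left frob_Aadj ..
  show "sdp_feasible A b (Y ** transpose Y)"
    using \<open>Y \<in> Mp A b\<close> by (rule sdp_feasible_mult_transpose)
  have "frob S (Y ** transpose Y) = 0"
    unfolding frob_mult_transpose \<open>S ** Y = 0\<close> by (simp add: frob_eq_sum)
  then have "frob C (Y ** transpose Y) = \<nu> \<bullet> b"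
    using \<open>Y \<in> Mp A b\<close> unfolding frob_C Mp_def by simp
  moreover fix X assume "sdp_feasible A b X"
  then have "\<nu> \<bullet> b \<le> frob C X"
    unfolding frob_C sdp_feasible_def using frob_psd_nonneg[OF \<open>psd S\<close>] by simp
  ultimately show "frob C (Y ** transpose Y) \<le> frob C X" by simp
qed

lemma sdp_optimal_imp_P_optimal:
  fixes Y :: "real^'p^'n"
  assumes "Y \<in> Mp A b" and "sdp_optimal A b C (Y ** transpose Y)"
  shows "P_optimal A b C Y"
  using assms sdp_feasible_mult_transpose
  unfolding P_optimal_def sdp_optimal_def P_obj_eq_frob by blast

theorem corollary2:
  fixes A :: "'m::finite \<Rightarrow> real^'n^'n" and b :: "real^'m" and C :: "real^'n^'n"
    and Y :: "real^'p^'n"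
  assumes "\<forall>i. sym_mat (A i)" and "sym_mat C"
    and "CARD('n) \<le> CARD('p)"
    and "assumption1 A b TYPE('p)"
    and "second_order_critical A b C Y"
  shows "P_optimal A b C Y \<and> sdp_optimal A b C (Y ** transpose Y)"
proof -
  let ?S = "Smat A C Y"
  have "Y \<in> Mp A b" and "?S ** Y = 0" and "\<forall>Yd\<in>tangent A Y. 0 \<le> frob Yd (?S ** Yd)"
    using assms(5) unfolding second_order_critical_def by auto
  moreover from this have "psd ?S"
    using second_order_condition_imp_psd[OF assms(3)] by blast
  moreover have "C = ?S + Aadj A (mult A C Y)" unfolding Smat_def by simp
  ultimately have "sdp_optimal A b C (Y ** transpose Y)"
    by (intro dual_certificate_imp_sdp_optimal)
  then show ?thesis
    using \<open>Y \<in> Mp A b\<close> sdp_optimal_imp_P_optimal by blast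
qed

end
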